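(* Let $G\subset\mathbb{C}^n$ be a bounded complete $n$-circled domain and let $(Q_k)_{k\in M}$ with $Q_k\in H_k(G)$ for each $k$. Then the series $\sum_{k\in M}Q_k$ converges (absolutely and uniformly on compact subsets of $G$) to an element of $H(G)$ if and only if for every $0<r<1$ there exist $C>0$ and $0<\theta<1$ such that $\|Q_k\|_{rG}\le C\theta^{|k|}$ for all $k\in M$.
   Context: A set $A\subset\mathbb{C}^n$ is complete $n$-circled if $A=\bigcup_{z\in A}\mathbb{P}_n(|z_1|,\dots,|z_n|)$, $\mathbb{P}_n(\rho)$ the open polydisc at $0$ with polyradius $\rho$. $M$ is the set of nonzero $k\in(\mathbb{N}\cup\{0\})^n$ with relatively prime coordinates; $|k|=k_1+\cdots+k_n$. $H_k(G):=\{f\in H(G): f(z)=\sum_{l\ge1}c_lz^{kl}\text{ for some }(c_l)\in\mathbb{C}^{\mathbb N}\}$. $rG=\{rz:z\in G\}$ and $\|g\|_K=\sup_K|g|$. *)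

theory Defs
  imports "HOL-Analysis.Analysis"
begin

definition polydisc :: "('n::finite \<Rightarrow> real) \<Rightarrow> (complex^'n) set" where
  "polydisc \<rho> = {w. \<forall>i. norm (w $ i) < \<rho> i}"

definition complete_circled :: "(complex^'n::finite) set \<Rightarrow> bool" where
  "complete_circled A \<longleftrightarrow> A = (\<Union>z\<in>A. polydisc (\<lambda>i. norm (z $ i)))"

definition domain :: "(complex^'n::finite) set \<Rightarrow> bool" where
  "domain G \<longleftrightarrow> open G \<and> connected G \<and> G \<noteq> {}"

definition holo_on :: "(complex^'n::finite) set \<Rightarrow> (complex^'n \<Rightarrow> complex) \<Rightarrow> bool" where
  "holo_on G f \<longleftrightarrow> (\<forall>z\<in>G. \<exists>L. (f has_derivative L) (at z) \<and> (\<forall>c w. L (c *s w) = c * L w))"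

definition H :: "(complex^'n::finite) set \<Rightarrow> (complex^'n \<Rightarrow> complex) set" where
  "H G = {f. holo_on G f}"

definition monom :: "('n::finite \<Rightarrow> nat) \<Rightarrow> complex^'n \<Rightarrow> complex" where
  "monom k z = (\<Prod>i\<in>UNIV. (z $ i) ^ k i)"

definition mlen :: "('n::finite \<Rightarrow> nat) \<Rightarrow> nat" where
  "mlen k = (\<Sum>i\<in>UNIV. k i)"

definition M :: "('n::finite \<Rightarrow> nat) set" where
  "M = {k. k \<noteq> (\<lambda>_. 0) \<and> Gcd (range k) = 1}"

definition Hk :: "('n::finite \<Rightarrow> nat) \<Rightarrow> (complex^'n) set \<Rightarrow> (complex^'n \<Rightarrow> complex) set" where
  "Hk k G = {f \<in> H G. \<exists>c::nat \<Rightarrow> complex.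
       \<forall>z\<in>G. (\<lambda>l. c (Suc l) * monom (\<lambda>i. k i * Suc l) z) sums f z}"

end

(*
  On each complex line through the origin, Q_k(mu w) = sum_l c_l w^(k(l+1)) mu^(|k|(l+1))
  vanishes to order |k| at mu = 0, so a Schwarz-lemma argument gives
  |Q_k(rho w)| <= |rho|^|k| * max_{|mu|=1} |Q_k(mu w)| for |rho| <= 1.  If the series converges
  locally uniformly, the Q_k are uniformly bounded on the compact circled set
  {mu s x : |mu| <= 1, x in closure G}, which lies in G for s < 1; with r < s, w = s x and
  rho = r/s this yields ||Q_k||_(rG) <= C (r/s)^|k|.
  Conversely, geometric decay gives the summable majorant C theta^|k| on each rG, and every
  compact subset of G lies in some rG.  Cauchy estimates turn the majorant into summable
  bounds for the derivatives, so the sum is holomorphic by term-by-term differentiation.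
*)

theory Submission
  imports Defs "HOL-Complex_Analysis.Complex_Analysis"
begin

no_notation fps_nth (infixl \<open>$\<close> 75)

section \<open>Sums over countable index sets\<close>

lemma finite_vimage_to_nat_atMost: "finite (to_nat -` {..N} :: 'a::countable set)"
  by (rule finite_vimageI) auto

lemma filterlim_vimage_to_nat_finite_subsets:
  "filterlim (\<lambda>N. A \<inter> to_nat -` {..N}) (finite_subsets_at_top (A :: 'a::countable set)) sequentially"
  unfolding filterlim_finite_subsets_at_top
proof (intro allI impI)
  fix X assume X: "finite X \<and> X \<subseteq> A"
  have "finite (A \<inter> to_nat -` {..N})" for N
    by (simp add: finite_vimage_to_nat_atMost)
  moreover have "X \<subseteq> A \<inter> to_nat -` {..N}" if "N \<ge> Max (to_nat ` X)" for N
  proof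
    fix k assume "k \<in> X"
    then have "to_nat k \<le> N"
      using X that by (meson Max_ge finite_imageI imageI le_trans)
    with \<open>k \<in> X\<close> X show "k \<in> A \<inter> to_nat -` {..N}"
      by auto
  qed
  ultimately show "\<forall>\<^sub>F N in sequentially. finite (A \<inter> to_nat -` {..N}) \<and>
      X \<subseteq> A \<inter> to_nat -` {..N} \<and> A \<inter> to_nat -` {..N} \<subseteq> A"
    unfolding eventually_sequentially by blast
qed

lemma has_sum_imp_LIMSEQ_to_nat:
  assumes "(g has_sum s) (A :: 'a::countable set)"
  shows "(\<lambda>N. sum g (A \<inter> to_nat -` {..N})) \<longlonglongrightarrow> s"
  using filterlim_compose[OF assms[unfolded has_sum_def] filterlim_vimage_to_nat_finite_subsets]
  by (simp add: o_def)

lemma infsum_Diff_to_nat: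
  fixes g :: "'a::countable \<Rightarrow> 'b::banach"
  assumes "g summable_on A"
  shows "infsum g (A - to_nat -` {..N}) = infsum g A - sum g (A \<inter> to_nat -` {..N})"
proof -
  have "finite (A \<inter> to_nat -` {..N})"
    by (simp add: finite_vimage_to_nat_atMost)
  moreover have "A - to_nat -` {..N} = A - (A \<inter> to_nat -` {..N})"
    by blast
  ultimately show ?thesis
    using infsum_Diff[OF assms, of "A \<inter> to_nat -` {..N}"] by simp
qed

lemma infsum_Diff_to_nat_LIMSEQ_0:
  fixes g :: "'a::countable \<Rightarrow> 'b::banach"
  assumes "g summable_on A"
  shows "(\<lambda>N. infsum g (A - to_nat -` {..N})) \<longlonglongrightarrow> 0"
proof -
  have "(\<lambda>N. infsum g A - sum g (A \<inter> to_nat -` {..N})) \<longlonglongrightarrow> infsum g A - infsum g A"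
    by (intro tendsto_diff tendsto_const has_sum_imp_LIMSEQ_to_nat has_sum_infsum assms)
  then show ?thesis
    by (simp add: infsum_Diff_to_nat[OF assms])
qed

lemma summable_on_small_tail:
  fixes g :: "'a \<Rightarrow> 'b::banach"
  assumes "g summable_on A" "\<epsilon> > 0"
  obtains F where "finite F" "F \<subseteq> A" "norm (infsum g (A - F)) < \<epsilon>"
proof -
  have "\<forall>\<^sub>F F in finite_subsets_at_top A. dist (sum g F) (infsum g A) < \<epsilon>"
    using assms has_sum_infsum[OF assms(1)] by (simp add: has_sum_def tendsto_iff)
  then obtain F where F: "finite F" "F \<subseteq> A" "dist (sum g F) (infsum g A) < \<epsilon>"
    unfolding eventually_finite_subsets_at_top by blast
  have "infsum g (A - F) = infsum g A - sum g F"
    using infsum_Diff[OF assms(1) summable_on_finite[OF F(1)]] F by (simp add: Int_absorb1)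
  with F show thesis
    by (intro that[of F]) (simp_all add: dist_norm norm_minus_commute)
qed

lemma summable_on_power_mlen:
  fixes \<theta> :: real
  assumes "0 \<le> \<theta>" "\<theta> < 1"
  shows "(\<lambda>k::'n::finite \<Rightarrow> nat. \<theta> ^ mlen k) summable_on A"
proof -
  have "Infinite_Set_Sum.abs_summable_on (\<lambda>j::nat. \<theta> ^ j) UNIV"
    using assms by (simp add: abs_summable_on_nat_iff summable_geometric)
  then have "Infinite_Set_Sum.abs_summable_on (\<lambda>k. \<Prod>i\<in>UNIV. \<theta> ^ k i) (PiE (UNIV::'n set) (\<lambda>_. UNIV))"
    by (intro abs_summable_on_prod_PiE) auto
  then have "(\<lambda>k::'n \<Rightarrow> nat. \<theta> ^ mlen k) summable_on UNIV"
    by (auto simp: abs_summable_equivalent[symmetric] PiE_UNIV_domain mlen_def power_sum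
        intro: abs_summable_summable)
  then show ?thesis by (rule summable_on_subset_banach) simp
qed

section \<open>Complete circled sets\<close>

lemma complete_circled_mono:
  assumes "complete_circled G" "w \<in> G" "\<And>i. norm (v $ i) \<le> norm (w $ i)"
  shows "v \<in> G"
proof -
  from assms(1,2) obtain z where z: "z \<in> G" "w \<in> polydisc (\<lambda>i. norm (z $ i))"
    unfolding complete_circled_def by blast
  then have "v \<in> polydisc (\<lambda>i. norm (z $ i))"
    unfolding polydisc_def using le_less_trans[OF assms(3)] by simp
  with z(1) assms(1) show ?thesis
    unfolding complete_circled_def by blast
qed

lemma complete_circled_smult:
  assumes "complete_circled G" "w \<in> G" "norm c \<le> 1"
  shows "c *s w \<in> G"
  using assms by (elim complete_circled_mono) (auto simp: norm_mult intro: mult_left_le_one_le)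

lemma complete_circled_scaleR:
  assumes "complete_circled G" "w \<in> G" "\<bar>r\<bar> \<le> 1"
  shows "r *\<^sub>R w \<in> G"
  using assms by (elim complete_circled_mono) (auto intro: mult_left_le_one_le)

lemma complete_circled_dilate_mono:
  assumes "complete_circled G" "0 < r" "r \<le> s" "s \<le> 1"
  shows "(\<lambda>w. r *\<^sub>R w) ` G \<subseteq> (\<lambda>w. s *\<^sub>R w) ` G"
proof
  fix z assume "z \<in> (\<lambda>w. r *\<^sub>R w) ` G"
  then obtain x where x: "x \<in> G" "z = r *\<^sub>R x" by blast
  have "(r / s) *\<^sub>R x \<in> G"
    using assms by (intro complete_circled_scaleR[OF assms(1) x(1)]) auto
  moreover have "z = s *\<^sub>R ((r / s) *\<^sub>R x)"
    using assms x by auto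
  ultimately show "z \<in> (\<lambda>w. s *\<^sub>R w) ` G" by blast
qed

lemma open_contains_dilate:
  fixes G :: "'a::real_normed_vector set"
  assumes "open G" "z \<in> G"
  obtains r where "0 < r" "r < 1" "z \<in> (\<lambda>w. r *\<^sub>R w) ` G"
proof -
  have "((\<lambda>s. s *\<^sub>R z) \<longlongrightarrow> 1 *\<^sub>R z) (at_right 1)"
    by (intro tendsto_intros)
  then have "\<forall>\<^sub>F s in at_right 1. s *\<^sub>R z \<in> G"
    using assms by (simp add: tendsto_def)
  moreover have "\<forall>\<^sub>F s in at_right (1::real). 1 < s"
    by (rule eventually_at_right_less)
  ultimately obtain s where s: "1 < s" "s *\<^sub>R z \<in> G"
    using eventually_happens'[OF trivial_limit_at_right_real eventually_conj] by blast
  have "z \<in> (\<lambda>w. (1 / s) *\<^sub>R w) ` G"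
    using s by (intro rev_image_eqI[of "s *\<^sub>R z"]) auto
  with s show thesis
    by (intro that[of "1 / s"]) auto
qed

lemma complete_circled_compact_subset_dilate:
  assumes "open G" "complete_circled G" "compact K" "K \<subseteq> G"
  obtains r where "0 < r" "r < 1" "K \<subseteq> (\<lambda>w. r *\<^sub>R w) ` G"
proof -
  have "K \<subseteq> (\<Union>r\<in>{0<..<1}. (\<lambda>w. r *\<^sub>R w) ` G)"
  proof
    fix z assume "z \<in> K"
    then obtain r where "0 < r" "r < 1" "z \<in> (\<lambda>w. r *\<^sub>R w) ` G"
      using open_contains_dilate[OF assms(1)] assms(4) by blast
    then show "z \<in> (\<Union>r\<in>{0<..<1}. (\<lambda>w. r *\<^sub>R w) ` G)"
      by auto
  qed
  moreover have "open ((\<lambda>w. r *\<^sub>R w) ` G)" if "r \<in> {0<..<1}" for r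
    using open_scaling[OF _ assms(1)] that by auto
  ultimately obtain R where R: "R \<subseteq> {0<..<1}" "finite R" "K \<subseteq> (\<Union>r\<in>R. (\<lambda>w. r *\<^sub>R w) ` G)"
    using compactE_image[OF assms(3)] by metis
  define r0 where "r0 = Max (insert (1/2) R)"
  have "r0 \<in> insert (1/2) R"
    unfolding r0_def using R(2) by (intro Max_in) auto
  moreover have le_r0: "\<forall>r\<in>R. r \<le> r0"
    unfolding r0_def using R(2) by simp
  ultimately have r0: "0 < r0" "r0 < 1"
    using R(1) by auto
  have "(\<lambda>w. r *\<^sub>R w) ` G \<subseteq> (\<lambda>w. r0 *\<^sub>R w) ` G" if "r \<in> R" for r
    using that R(1) r0 le_r0 by (intro complete_circled_dilate_mono[OF assms(2)]) auto
  then have "(\<Union>r\<in>R. (\<lambda>w. r *\<^sub>R w) ` G) \<subseteq> (\<lambda>w. r0 *\<^sub>R w) ` G"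
    by (rule UN_least)
  with R(3) have "K \<subseteq> (\<lambda>w. r0 *\<^sub>R w) ` G"
    by (rule subset_trans)
  with r0 show thesis
    by (rule that)
qed

lemma complete_circled_scaleR_closure:
  fixes G :: "(complex^'n::finite) set"
  assumes "complete_circled G" "x \<in> closure G" "0 \<le> r" "r < 1"
  shows "r *\<^sub>R x \<in> G"
proof -
  define I where "I = {i. x $ i \<noteq> 0}"
  define V where "V = (\<Inter>i\<in>I. {y::complex^'n. r * norm (x $ i) < norm (y $ i)})"
  have "open V"
    unfolding V_def by (intro open_INT ballI open_Collect_less continuous_intros) auto
  moreover have "x \<in> V"
    using assms(4) by (auto simp: V_def I_def)
  ultimately obtain y where y: "y \<in> V" "y \<in> G"
    using assms(2) open_Int_closure_eq_empty[of V G] by blast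
  show ?thesis
  proof (rule complete_circled_mono[OF assms(1) y(2)])
    fix i
    show "norm ((r *\<^sub>R x) $ i) \<le> norm (y $ i)"
      using y(1) assms(3) by (cases "i \<in> I") (auto simp: V_def I_def)
  qed
qed

section \<open>Holomorphic functions of several variables\<close>

lemma norm_vector_smult_complex: "norm (c *s (x :: complex^'n::finite)) = norm c * norm x"
  unfolding norm_vec_def by (simp add: L2_set_right_distrib norm_mult)

lemma holo_on_subset: "holo_on U f \<Longrightarrow> V \<subseteq> U \<Longrightarrow> holo_on V f"
  unfolding holo_on_def by blast

lemma holo_on_frechet_derivative:
  assumes "holo_on U f" "z \<in> U"
  shows "(f has_derivative frechet_derivative f (at z)) (at z)"
    and "frechet_derivative f (at z) (c *s w) = c * frechet_derivative f (at z) w"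
proof -
  obtain L where "(f has_derivative L) (at z)" "\<forall>c w. L (c *s w) = c * L w"
    using assms unfolding holo_on_def by blast
  moreover have "L = frechet_derivative f (at z)"
    using calculation(1) by (rule frechet_derivative_at)
  ultimately show "(f has_derivative frechet_derivative f (at z)) (at z)"
    and "frechet_derivative f (at z) (c *s w) = c * frechet_derivative f (at z) w"
    by auto
qed

lemma holo_on_imp_continuous_on: "holo_on U f \<Longrightarrow> continuous_on U f"
  by (meson continuous_at_imp_continuous_on has_derivative_continuous holo_on_frechet_derivative(1))

lemma holo_on_line_has_field_derivative:
  assumes "holo_on U q" "x + \<mu> *s h \<in> U"
  shows "((\<lambda>\<mu>. q (x + \<mu> *s h)) has_field_derivative frechet_derivative q (at (x + \<mu> *s h)) h) (at \<mu>)"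
proof -
  let ?D = "frechet_derivative q (at (x + \<mu> *s h))"
  have "linear (\<lambda>\<mu>::complex. \<mu> *s h)"
    by (rule linearI) (simp_all add: vec_eq_iff algebra_simps)
  then have "((\<lambda>\<mu>. x + \<mu> *s h) has_derivative (\<lambda>\<mu>. \<mu> *s h)) (at \<mu>)"
    by (auto intro!: derivative_eq_intros linear_imp_has_derivative)
  from diff_chain_at[OF this holo_on_frechet_derivative(1)[OF assms]]
  have "((\<lambda>\<mu>. q (x + \<mu> *s h)) has_derivative (\<lambda>\<mu>. ?D (\<mu> *s h))) (at \<mu>)"
    by (simp add: o_def)
  moreover have "?D (c *s h) = ?D h * c" for c
    using holo_on_frechet_derivative(2)[OF assms] by (simp add: mult.commute)
  ultimately show ?thesis
    by (simp add: has_field_derivative_def)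
qed

(* The one-variable Cauchy estimate for mu \<mapsto> q (x + mu *s h) at mu = 0. *)
lemma norm_frechet_derivative_le:
  assumes "holo_on (ball x R) q" "\<And>y. y \<in> ball x R \<Longrightarrow> norm (q y) \<le> B" "0 < d" "d < R"
  shows "norm (frechet_derivative q (at x) h) \<le> B / d * norm h"
proof (cases "h = 0")
  case True
  have "(q has_derivative frechet_derivative q (at x)) (at x)"
    using holo_on_frechet_derivative(1)[OF assms(1)] assms(3,4) by simp
  with True show ?thesis
    using linear_0[OF has_derivative_linear] by simp
next
  case False
  define \<phi> where "\<phi> = (\<lambda>\<mu>. q (x + \<mu> *s h))"
  define \<rho> where "\<rho> = R / norm h"
  have line: "x + \<mu> *s h \<in> ball x R \<longleftrightarrow> \<mu> \<in> ball 0 \<rho>" for \<mu>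
    using False by (simp add: \<rho>_def dist_norm norm_vector_smult_complex field_simps)
  have holo: "\<phi> holomorphic_on ball 0 \<rho>"
    unfolding holomorphic_on_def field_differentiable_def \<phi>_def
    using holo_on_line_has_field_derivative[OF assms(1)] line
    by (metis has_field_derivative_at_within)
  have "norm ((deriv ^^ 1) \<phi> 0) \<le> fact 1 * B / (d / norm h) ^ 1"
  proof (rule Cauchy_inequality)
    have "d / norm h < \<rho>"
      using assms(4) False by (simp add: \<rho>_def divide_strict_right_mono)
    then have "\<phi> holomorphic_on cball 0 (d / norm h)"
      by (intro holomorphic_on_subset[OF holo]) auto
    then show "\<phi> holomorphic_on ball 0 (d / norm h)" "continuous_on (cball 0 (d / norm h)) \<phi>"
      using holomorphic_on_subset ball_subset_cball holomorphic_on_imp_continuous_on by blast+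
    show "0 < d / norm h"
      using assms(3) False by simp
    fix \<mu> :: complex
    assume "norm (0 - \<mu>) = d / norm h"
    then have "\<mu> \<in> ball 0 \<rho>"
      using assms(4) False by (simp add: \<rho>_def divide_strict_right_mono)
    then show "norm (\<phi> \<mu>) \<le> B"
      using line assms(2) by (simp add: \<phi>_def)
  qed
  moreover have "deriv \<phi> 0 = frechet_derivative q (at x) h"
    using holo_on_line_has_field_derivative[OF assms(1), of x 0 h] assms(3,4)
    by (simp add: \<phi>_def DERIV_imp_deriv)
  ultimately show ?thesis
    using False by (simp add: field_simps)
qed

lemma eventually_norm_partial_sums_to_nat_le:
  fixes f :: "'a::countable \<Rightarrow> 'p \<Rightarrow> 'c::banach"
  assumes "c summable_on A" "\<epsilon> > 0"
    and bound: "\<And>k p. k \<in> A \<Longrightarrow> p \<in> P \<Longrightarrow> norm (f k p) \<le> c k * m p"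
    and "\<And>p. p \<in> P \<Longrightarrow> 0 \<le> m p"
  shows "\<forall>\<^sub>F N in sequentially. \<forall>p\<in>P.
    norm ((\<Sum>k\<in>A \<inter> to_nat -` {..N}. f k p) - (\<Sum>\<^sub>\<infinity>k\<in>A. f k p)) \<le> \<epsilon> * m p"
proof -
  have f_abs_summable: "(\<lambda>k. norm (f k p)) summable_on A" if "p \<in> P" for p
    by (rule summable_on_comparison_test[OF summable_on_cmult_left[OF \<open>c summable_on A\<close>]])
      (use bound that in auto)
  have close: "norm ((\<Sum>k\<in>A \<inter> to_nat -` {..N}. f k p) - (\<Sum>\<^sub>\<infinity>k\<in>A. f k p)) \<le> \<epsilon> * m p"
    if small: "norm (infsum c (A - to_nat -` {..N})) < \<epsilon>" and "p \<in> P" for N p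
  proof -
    have "norm ((\<Sum>k\<in>A \<inter> to_nat -` {..N}. f k p) - (\<Sum>\<^sub>\<infinity>k\<in>A. f k p))
        = norm (\<Sum>\<^sub>\<infinity>k\<in>A - to_nat -` {..N}. f k p)"
      using infsum_Diff_to_nat[OF abs_summable_summable[OF f_abs_summable[OF \<open>p \<in> P\<close>]]]
      by (simp add: norm_minus_commute)
    also have "\<dots> \<le> (\<Sum>\<^sub>\<infinity>k\<in>A - to_nat -` {..N}. norm (f k p))"
      by (intro norm_infsum_bound summable_on_subset_banach[OF f_abs_summable[OF \<open>p \<in> P\<close>]]) auto
    also have "\<dots> \<le> (\<Sum>\<^sub>\<infinity>k\<in>A - to_nat -` {..N}. c k * m p)"
      using bound \<open>p \<in> P\<close>
      by (intro infsum_mono summable_on_cmult_left summable_on_subset_banach[OF f_abs_summable]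
          summable_on_subset_banach[OF \<open>c summable_on A\<close>]) auto
    also have "\<dots> = infsum c (A - to_nat -` {..N}) * m p"
      by (rule infsum_cmult_left')
    also have "\<dots> \<le> \<epsilon> * m p"
      using small assms(4)[OF \<open>p \<in> P\<close>] by (intro mult_right_mono) auto
    finally show ?thesis .
  qed
  have "\<forall>\<^sub>F N in sequentially. norm (infsum c (A - to_nat -` {..N})) < \<epsilon>"
    using infsum_Diff_to_nat_LIMSEQ_0[OF \<open>c summable_on A\<close>] \<open>\<epsilon> > 0\<close>
    by (simp add: tendsto_iff dist_norm)
  then show ?thesis
    by (rule eventually_mono) (use close in blast)
qed

lemma has_derivative_infsum:
  fixes Q :: "'a::countable \<Rightarrow> 'b::real_normed_vector \<Rightarrow> 'c::banach"
  assumes "convex S" "open S" "x \<in> S"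
    and deriv: "\<And>k x. k \<in> A \<Longrightarrow> x \<in> S \<Longrightarrow> (Q k has_derivative D k x) (at x)"
    and bound: "\<And>k x h. k \<in> A \<Longrightarrow> x \<in> S \<Longrightarrow> norm (D k x h) \<le> c k * norm h"
    and "c summable_on A"
    and summable: "\<And>x. x \<in> S \<Longrightarrow> (\<lambda>k. Q k x) summable_on A"
  shows "((\<lambda>z. \<Sum>\<^sub>\<infinity>k\<in>A. Q k z) has_derivative (\<lambda>h. \<Sum>\<^sub>\<infinity>k\<in>A. D k x h)) (at x)"
proof -
  define P where "P N = A \<inter> to_nat -` {..N}" for N
  have uniform: "\<forall>\<^sub>F N in sequentially. \<forall>y\<in>S. \<forall>h.
      norm ((\<Sum>k\<in>P N. D k y h) - (\<Sum>\<^sub>\<infinity>k\<in>A. D k y h)) \<le> \<epsilon> * norm h"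
    if "\<epsilon> > 0" for \<epsilon>
  proof -
    have "\<forall>\<^sub>F N in sequentially. \<forall>p\<in>S \<times> UNIV. norm ((\<Sum>k\<in>P N. D k (fst p) (snd p)) -
        (\<Sum>\<^sub>\<infinity>k\<in>A. D k (fst p) (snd p))) \<le> \<epsilon> * norm (snd p)"
      unfolding P_def using bound
      by (intro eventually_norm_partial_sums_to_nat_le[OF \<open>c summable_on A\<close> that]) auto
    then show ?thesis
      by (rule eventually_mono) (simp add: Ball_def)
  qed
  have partial_derivs: "((\<lambda>z. \<Sum>k\<in>P N. Q k z) has_derivative (\<lambda>h. \<Sum>k\<in>P N. D k y h)) (at y within S)"
    if "y \<in> S" for N y
    using deriv that by (intro has_derivative_sum[THEN has_derivative_at_withinI]) (auto simp: P_def)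
  have partial_sums: "(\<lambda>N. \<Sum>k\<in>P N. Q k y) \<longlonglongrightarrow> (\<Sum>\<^sub>\<infinity>k\<in>A. Q k y)" if "y \<in> S" for y
    unfolding P_def using summable[OF that] by (intro has_sum_imp_LIMSEQ_to_nat has_sum_infsum)
  obtain g where g: "\<forall>y\<in>S. (\<lambda>N. \<Sum>k\<in>P N. Q k y) \<longlonglongrightarrow> g y \<and>
      (g has_derivative (\<lambda>h. \<Sum>\<^sub>\<infinity>k\<in>A. D k y h)) (at y within S)"
    using has_derivative_sequence[OF \<open>convex S\<close> partial_derivs uniform \<open>x \<in> S\<close> partial_sums[OF \<open>x \<in> S\<close>]]
    by blast
  have "(g has_derivative (\<lambda>h. \<Sum>\<^sub>\<infinity>k\<in>A. D k x h)) (at x within S)"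
    using g \<open>x \<in> S\<close> by blast
  then have g_deriv: "(g has_derivative (\<lambda>h. \<Sum>\<^sub>\<infinity>k\<in>A. D k x h)) (at x)"
    by (simp add: at_within_open[OF \<open>x \<in> S\<close> \<open>open S\<close>])
  have "g y = (\<Sum>\<^sub>\<infinity>k\<in>A. Q k y)" if "y \<in> S" for y
    using g partial_sums that LIMSEQ_unique by blast
  then show ?thesis
    by (intro has_derivative_transform_within_open[OF g_deriv \<open>open S\<close> \<open>x \<in> S\<close>])
qed

lemma holo_on_infsum:
  fixes Q :: "'a::countable \<Rightarrow> complex^'n::finite \<Rightarrow> complex"
  assumes "open U"
    and holo: "\<And>k. k \<in> A \<Longrightarrow> holo_on U (Q k)"
    and bound: "\<And>k z. k \<in> A \<Longrightarrow> z \<in> U \<Longrightarrow> norm (Q k z) \<le> b k"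
    and "b summable_on A"
  shows "holo_on U (\<lambda>z. \<Sum>\<^sub>\<infinity>k\<in>A. Q k z)"
  unfolding holo_on_def
proof
  fix z assume "z \<in> U"
  then obtain e where "e > 0" "ball z e \<subseteq> U"
    using \<open>open U\<close> open_contains_ball by blast
  define \<delta> where "\<delta> = e / 2"
  have "\<delta> > 0" "ball z (2 * \<delta>) \<subseteq> U"
    using \<open>e > 0\<close> \<open>ball z e \<subseteq> U\<close> by (auto simp: \<delta>_def)
  define D where "D k x = frechet_derivative (Q k) (at x)" for k x
  have ball_subset: "ball x \<delta> \<subseteq> U" if "x \<in> ball z \<delta>" for x
    using that by (intro order_trans[OF _ \<open>ball z (2 * \<delta>) \<subseteq> U\<close>]) (simp add: ball_subset_ball_iff dist_commute)
  have in_U: "x \<in> U" if "x \<in> ball z \<delta>" for x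
    using ball_subset[OF that] \<open>\<delta> > 0\<close> centre_in_ball by blast
  have "((\<lambda>z. \<Sum>\<^sub>\<infinity>k\<in>A. Q k z) has_derivative (\<lambda>h. \<Sum>\<^sub>\<infinity>k\<in>A. D k z h)) (at z)"
  proof (rule has_derivative_infsum[where c = "\<lambda>k. b k * (2 / \<delta>)"])
    show "(Q k has_derivative D k x) (at x)" if "k \<in> A" "x \<in> ball z \<delta>" for k x
      unfolding D_def using holo[OF that(1)] in_U[OF that(2)] by (rule holo_on_frechet_derivative(1))
    show "norm (D k x h) \<le> b k * (2 / \<delta>) * norm h" if "k \<in> A" "x \<in> ball z \<delta>" for k x h
    proof -
      have "norm (D k x h) \<le> b k / (\<delta> / 2) * norm h"
        unfolding D_def using ball_subset[OF that(2)] bound that(1) \<open>\<delta> > 0\<close>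
        by (intro norm_frechet_derivative_le holo_on_subset[OF holo]) auto
      then show ?thesis
        by simp
    qed
    show "(\<lambda>k. Q k x) summable_on A" if "x \<in> ball z \<delta>" for x
      by (rule abs_summable_summable, rule summable_on_comparison_test[OF \<open>b summable_on A\<close>])
        (use in_U[OF that] bound in auto)
    show "(\<lambda>k. b k * (2 / \<delta>)) summable_on A"
      using \<open>b summable_on A\<close> by (rule summable_on_cmult_left)
  qed (use \<open>\<delta> > 0\<close> in simp_all)
  moreover have "(\<Sum>\<^sub>\<infinity>k\<in>A. D k z (c *s w)) = c * (\<Sum>\<^sub>\<infinity>k\<in>A. D k z w)" for c w
  proof -
    have "(\<Sum>\<^sub>\<infinity>k\<in>A. D k z (c *s w)) = (\<Sum>\<^sub>\<infinity>k\<in>A. c * D k z w)"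
      using holo_on_frechet_derivative(2)[OF holo \<open>z \<in> U\<close>] by (intro infsum_cong) (simp add: D_def)
    also have "\<dots> = c * (\<Sum>\<^sub>\<infinity>k\<in>A. D k z w)"
      by (rule infsum_cmult_right')
    finally show ?thesis .
  qed
  ultimately show "\<exists>L. ((\<lambda>z. \<Sum>\<^sub>\<infinity>k\<in>A. Q k z) has_derivative L) (at z) \<and> (\<forall>c w. L (c *s w) = c * L w)"
    by blast
qed

section \<open>Homogeneous expansions\<close>

lemma monom_smult: "monom k (c *s w) = c ^ mlen k * monom k w"
  unfolding monom_def mlen_def by (simp add: power_mult_distrib prod.distrib power_sum)

lemma mlen_mult: "mlen (\<lambda>i. k i * l) = mlen k * l"
  unfolding mlen_def by (rule sum_distrib_right[symmetric])

lemma mlen_pos_iff: "0 < mlen k \<longleftrightarrow> k \<noteq> (\<lambda>_. 0)"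
  unfolding mlen_def by (simp add: fun_eq_iff flip: neq0_conv)

lemma Schwarz_power_bound:
  fixes f \<phi> :: "complex \<Rightarrow> complex"
  assumes "1 < t" "f holomorphic_on ball 0 t"
    and factor: "\<And>\<mu>. norm \<mu> < t \<Longrightarrow> \<phi> \<mu> = \<mu> ^ m * f \<mu>"
    and bound: "\<And>\<mu>. norm \<mu> = 1 \<Longrightarrow> norm (\<phi> \<mu>) \<le> S"
    and "norm \<rho> \<le> 1"
  shows "norm (\<phi> \<rho>) \<le> norm \<rho> ^ m * S"
proof -
  have "norm (f \<rho>) \<le> S"
  proof (rule maximum_modulus_frontier[where f = f and S = "cball 0 1"])
    have "f holomorphic_on cball 0 1"
      using assms(1) by (intro holomorphic_on_subset[OF assms(2)]) auto
    then show "f holomorphic_on interior (cball 0 1)" "continuous_on (closure (cball 0 1)) f"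
      using holomorphic_on_subset ball_subset_cball holomorphic_on_imp_continuous_on by auto
    show "norm (f \<mu>) \<le> S" if "\<mu> \<in> frontier (cball 0 1)" for \<mu>
    proof -
      have "norm \<mu> = 1"
        using that by simp
      then have "norm (\<phi> \<mu>) = norm (f \<mu>)"
        using factor[of \<mu>] assms(1) by (simp add: norm_mult norm_power)
      with bound \<open>norm \<mu> = 1\<close> show ?thesis
        by metis
    qed
  qed (use \<open>norm \<rho> \<le> 1\<close> in auto)
  then show ?thesis
    using factor[of \<rho>] \<open>norm \<rho> \<le> 1\<close> assms(1) by (simp add: norm_mult norm_power mult_left_mono)
qed

lemma sums_multiple_powers_factor:
  fixes a :: "nat \<Rightarrow> complex"
  assumes "0 < m" "1 < R"
    and sums: "\<And>\<mu>. norm \<mu> < R \<Longrightarrow> (\<lambda>l. a l * \<mu> ^ (m * Suc l)) sums \<phi> \<mu>"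
  obtains t f where "1 < t" "f holomorphic_on ball 0 t" "\<And>\<mu>. norm \<mu> < t \<Longrightarrow> \<phi> \<mu> = \<mu> ^ m * f \<mu>"
proof -
  define t where "t = (1 + R) / 2"
  have t: "1 < t" "t < R"
    using \<open>1 < R\<close> by (auto simp: t_def)
  define P where "P u = (\<Sum>l. a l * u ^ l)" for u :: complex
  have split_power: "a l * \<mu> ^ (m * Suc l) = \<mu> ^ m * (a l * (\<mu> ^ m) ^ l)" for \<mu> l
    by (simp add: power_add power_mult)
  have "summable (\<lambda>l. a l * of_real t ^ (m * Suc l))"
    using sums[of "of_real t"] t by (auto intro: sums_summable)
  then have "summable (\<lambda>l. of_real t ^ m * (a l * (of_real t ^ m) ^ l))"
    by (simp only: split_power)
  then have summable_t: "summable (\<lambda>l. a l * (of_real t ^ m) ^ l)"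
    using t by simp
  have power_inside: "norm (\<mu> ^ m) < t ^ m" if "norm \<mu> < t" for \<mu> :: complex
    using that \<open>0 < m\<close> by (simp add: norm_power power_strict_mono)
  have holo: "(\<lambda>\<mu>. P (\<mu> ^ m)) holomorphic_on ball 0 t"
  proof (subst holomorphic_on_open, simp, intro ballI exI)
    fix \<mu> :: complex assume "\<mu> \<in> ball 0 t"
    then have "norm (\<mu> ^ m) < norm (of_real t ^ m :: complex)"
      using power_inside t by (simp add: norm_power)
    then show "((\<lambda>\<mu>. P (\<mu> ^ m)) has_field_derivative
        (\<Sum>l. diffs a l * (\<mu> ^ m) ^ l) * (of_nat m * \<mu> ^ (m - 1))) (at \<mu>)"
      unfolding P_def by (intro DERIV_chain2[OF termdiffs_strong[OF summable_t]] derivative_eq_intros) auto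
  qed
  have factor: "\<phi> \<mu> = \<mu> ^ m * P (\<mu> ^ m)" if "norm \<mu> < t" for \<mu>
  proof -
    have "norm (\<mu> ^ m) < norm (of_real t ^ m :: complex)"
      using power_inside[OF that] t by (simp add: norm_power)
    then have "(\<lambda>l. a l * (\<mu> ^ m) ^ l) sums P (\<mu> ^ m)"
      unfolding P_def by (intro summable_sums powser_inside[OF summable_t])
    then have "(\<lambda>l. a l * \<mu> ^ (m * Suc l)) sums (\<mu> ^ m * P (\<mu> ^ m))"
      unfolding split_power by (rule sums_mult)
    moreover have "(\<lambda>l. a l * \<mu> ^ (m * Suc l)) sums \<phi> \<mu>"
      using sums that t by simp
    ultimately show ?thesis
      by (rule sums_unique2[symmetric])
  qed
  show thesis
    by (rule that[OF t(1) holo factor])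
qed

lemma Hk_norm_smult_le:
  assumes "q \<in> Hk k G" "k \<noteq> (\<lambda>_. 0)" "1 < R"
    and line: "\<And>\<mu>. norm \<mu> < R \<Longrightarrow> \<mu> *s w \<in> G"
    and bound: "\<And>\<mu>. norm \<mu> = 1 \<Longrightarrow> norm (q (\<mu> *s w)) \<le> S"
    and "norm \<rho> \<le> 1"
  shows "norm (q (\<rho> *s w)) \<le> norm \<rho> ^ mlen k * S"
proof -
  obtain c where c: "\<forall>z\<in>G. (\<lambda>l. c (Suc l) * monom (\<lambda>i. k i * Suc l) z) sums q z"
    using assms(1) by (auto simp: Hk_def)
  have monom_line: "c (Suc l) * monom (\<lambda>i. k i * Suc l) (\<mu> *s w)
      = c (Suc l) * monom (\<lambda>i. k i * Suc l) w * \<mu> ^ (mlen k * Suc l)" for \<mu> l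
    unfolding monom_smult mlen_mult by (simp only: mult_ac)
  have sums: "(\<lambda>l. c (Suc l) * monom (\<lambda>i. k i * Suc l) w * \<mu> ^ (mlen k * Suc l)) sums q (\<mu> *s w)"
    if "norm \<mu> < R" for \<mu>
    using c line[OF that] by (simp only: monom_line flip: monom_line)
  have "0 < mlen k"
    using assms(2) by (simp add: mlen_pos_iff)
  then obtain t f where "1 < t" "f holomorphic_on ball 0 t"
    and "\<And>\<mu>. norm \<mu> < t \<Longrightarrow> q (\<mu> *s w) = \<mu> ^ mlen k * f \<mu>"
    using sums_multiple_powers_factor[OF _ \<open>1 < R\<close> sums] by blast
  then show ?thesis
    using bound \<open>norm \<rho> \<le> 1\<close> by (rule Schwarz_power_bound[where \<phi> = "\<lambda>\<mu>. q (\<mu> *s w)"])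
qed

section \<open>Locally uniform convergence and geometric decay\<close>

definition abs_summable_locally_uniformly_on ::
    "'b::topological_space set \<Rightarrow> 'a set \<Rightarrow> ('a \<Rightarrow> 'b \<Rightarrow> 'c::real_normed_vector) \<Rightarrow> bool" where
  "abs_summable_locally_uniformly_on G A Q \<longleftrightarrow>
     (\<forall>z\<in>G. (\<lambda>k. norm (Q k z)) summable_on A) \<and>
     (\<forall>K. compact K \<and> K \<subseteq> G \<longrightarrow>
        (\<forall>\<epsilon>>0. \<exists>F. finite F \<and> F \<subseteq> A \<and> (\<forall>z\<in>K. infsum (\<lambda>k. norm (Q k z)) (A - F) < \<epsilon>)))"

definition geometric_decay_on_dilates ::
    "'b::real_vector set \<Rightarrow> ('i::finite \<Rightarrow> nat) set \<Rightarrow> (('i \<Rightarrow> nat) \<Rightarrow> 'b \<Rightarrow> 'c::real_normed_vector) \<Rightarrow> bool" where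
  "geometric_decay_on_dilates G A Q \<longleftrightarrow>
     (\<forall>r::real. 0 < r \<and> r < 1 \<longrightarrow>
        (\<exists>C>0. \<exists>\<theta>::real. 0 < \<theta> \<and> \<theta> < 1 \<and>
           (\<forall>k\<in>A. \<forall>z\<in>(\<lambda>w. r *\<^sub>R w) ` G. norm (Q k z) \<le> C * \<theta> ^ mlen k)))"

lemma abs_summable_locally_uniformly_on_has_sum:
  fixes Q :: "'a \<Rightarrow> 'b::topological_space \<Rightarrow> 'c::banach"
  assumes "abs_summable_locally_uniformly_on G A Q" "z \<in> G"
  shows "((\<lambda>k. Q k z) has_sum (\<Sum>\<^sub>\<infinity>k\<in>A. Q k z)) A"
  using assms unfolding abs_summable_locally_uniformly_on_def
  by (intro has_sum_infsum[OF abs_summable_summable]) blast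

lemma abs_summable_locally_uniformly_onI:
  assumes "\<And>K. compact K \<Longrightarrow> K \<subseteq> G \<Longrightarrow>
      \<exists>b. b summable_on A \<and> (\<forall>k\<in>A. \<forall>z\<in>K. norm (Q k z) \<le> b k)"
  shows "abs_summable_locally_uniformly_on G A Q"
proof -
  have summable: "(\<lambda>k. norm (Q k z)) summable_on B"
    if "b summable_on A" "\<forall>k\<in>A. norm (Q k z) \<le> b k" "B \<subseteq> A" for b z B
    by (rule summable_on_comparison_test[OF summable_on_subset_banach[OF that(1,3)]]) (use that in auto)
  have tails: "\<exists>F. finite F \<and> F \<subseteq> A \<and> (\<forall>z\<in>K. infsum (\<lambda>k. norm (Q k z)) (A - F) < \<epsilon>)"
    if K: "compact K" "K \<subseteq> G" and "\<epsilon> > 0" for K \<epsilon>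
  proof -
    obtain b where b: "b summable_on A" "\<forall>k\<in>A. \<forall>z\<in>K. norm (Q k z) \<le> b k"
      using assms K by blast
    obtain F where F: "finite F" "F \<subseteq> A" "norm (infsum b (A - F)) < \<epsilon>"
      using summable_on_small_tail[OF b(1) \<open>\<epsilon> > 0\<close>] .
    have "infsum b (A - F) < \<epsilon>"
      using F(3) abs_ge_self[of "infsum b (A - F)"] by simp
    moreover have "infsum (\<lambda>k. norm (Q k z)) (A - F) \<le> infsum b (A - F)" if "z \<in> K" for z
      using b that by (intro infsum_mono summable[OF b(1)] summable_on_subset_banach[OF b(1)]) auto
    ultimately have "\<forall>z\<in>K. infsum (\<lambda>k. norm (Q k z)) (A - F) < \<epsilon>"
      by fastforce
    with F(1,2) show ?thesis
      by blast
  qed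
  have pointwise: "(\<lambda>k. norm (Q k z)) summable_on A" if z: "z \<in> G" for z
  proof -
    obtain b where "b summable_on A" "\<forall>k\<in>A. norm (Q k z) \<le> b k"
      using assms[of "{z}"] z by auto
    then show ?thesis
      by (rule summable) simp
  qed
  show ?thesis
    unfolding abs_summable_locally_uniformly_on_def
  proof (intro conjI ballI allI impI)
    fix K and \<epsilon> :: real
    assume "compact K \<and> K \<subseteq> G" "\<epsilon> > 0"
    then show "\<exists>F. finite F \<and> F \<subseteq> A \<and> (\<forall>z\<in>K. infsum (\<lambda>k. norm (Q k z)) (A - F) < \<epsilon>)"
      using tails by blast
  qed (rule pointwise)
qed

lemma abs_summable_locally_uniformly_on_bounded:
  fixes Q :: "'a \<Rightarrow> 'b::topological_space \<Rightarrow> 'c::real_normed_vector"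
  assumes "abs_summable_locally_uniformly_on G A Q" "compact K" "K \<subseteq> G"
    and "\<And>k. k \<in> A \<Longrightarrow> continuous_on K (Q k)"
  obtains S where "S > 0" "\<And>k z. k \<in> A \<Longrightarrow> z \<in> K \<Longrightarrow> norm (Q k z) \<le> S"
proof -
  have "\<forall>\<epsilon>>0. \<exists>F. finite F \<and> F \<subseteq> A \<and> (\<forall>z\<in>K. infsum (\<lambda>k. norm (Q k z)) (A - F) < \<epsilon>)"
    using assms(1-3) unfolding abs_summable_locally_uniformly_on_def by blast
  then obtain F where F: "finite F" "F \<subseteq> A" "\<forall>z\<in>K. infsum (\<lambda>k. norm (Q k z)) (A - F) < 1"
    using zero_less_one by blast
  have "bounded (\<Union>k\<in>F. Q k ` K)"
    using F(1,2) assms(2,4) by (intro bounded_UN ballI compact_imp_bounded compact_continuous_image) auto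
  then obtain B where B: "\<And>k z. k \<in> F \<Longrightarrow> z \<in> K \<Longrightarrow> norm (Q k z) \<le> B"
    unfolding bounded_iff by blast
  have "norm (Q k z) \<le> max B 1" if "k \<in> A" "z \<in> K" for k z
  proof (cases "k \<in> F")
    case False
    have "(\<lambda>k. norm (Q k z)) summable_on A"
      using assms(1,3) that(2) unfolding abs_summable_locally_uniformly_on_def by blast
    then have "(\<lambda>k. norm (Q k z)) summable_on A - F"
      by (rule summable_on_subset_banach) blast
    then have "norm (Q k z) \<le> infsum (\<lambda>k. norm (Q k z)) (A - F)"
      using finite_sum_le_infsum[of "\<lambda>k. norm (Q k z)" "A - F" "{k}"] that(1) False by simp
    also have "\<dots> < 1"
      using F(3) that(2) by blast
    finally show ?thesis
      by simp
  next
    case True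
    then show ?thesis
      using B[OF True that(2)] by (simp add: le_max_iff_disj)
  qed
  then show thesis
    by (intro that[of "max B 1"]) auto
qed

lemma geometric_decay_majorant:
  assumes "open G" "complete_circled G" "geometric_decay_on_dilates G A Q" "compact K" "K \<subseteq> G"
  shows "\<exists>b. b summable_on A \<and> (\<forall>k\<in>A. \<forall>z\<in>K. norm (Q k z) \<le> b k)"
proof -
  obtain r where r: "0 < r" "r < 1" "K \<subseteq> (\<lambda>w. r *\<^sub>R w) ` G"
    using complete_circled_compact_subset_dilate[OF assms(1,2,4,5)] .
  then obtain C \<theta> where "0 < \<theta>" "\<theta> < 1" "\<forall>k\<in>A. \<forall>z\<in>(\<lambda>w. r *\<^sub>R w) ` G. norm (Q k z) \<le> C * \<theta> ^ mlen k"
    using assms(3) unfolding geometric_decay_on_dilates_def by blast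
  moreover have "(\<lambda>k. C * \<theta> ^ mlen k) summable_on A"
    using \<open>0 < \<theta>\<close> \<open>\<theta> < 1\<close> by (intro summable_on_cmult_right summable_on_power_mlen) auto
  ultimately show ?thesis
    using r(3) by (intro exI[of _ "\<lambda>k. C * \<theta> ^ mlen k"]) blast
qed

lemma geometric_decay_imp_holo_on_infsum:
  assumes "open G" "complete_circled G" "geometric_decay_on_dilates G A Q"
    and holo: "\<And>k. k \<in> A \<Longrightarrow> holo_on G (Q k)"
  shows "holo_on G (\<lambda>z. \<Sum>\<^sub>\<infinity>k\<in>A. Q k z)"
  unfolding holo_on_def
proof
  fix z assume "z \<in> G"
  then obtain r where r: "0 < r" "r < 1" "z \<in> (\<lambda>w. r *\<^sub>R w) ` G"
    using open_contains_dilate[OF assms(1)] by blast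
  define U where "U = (\<lambda>w. r *\<^sub>R w) ` G"
  have "U \<subseteq> G"
    unfolding U_def using complete_circled_scaleR[OF assms(2)] r by auto
  obtain C \<theta> where "0 < \<theta>" "\<theta> < 1" and bound: "\<forall>k\<in>A. \<forall>z\<in>U. norm (Q k z) \<le> C * \<theta> ^ mlen k"
    using assms(3) r unfolding geometric_decay_on_dilates_def U_def by blast
  have "(\<lambda>k. C * \<theta> ^ mlen k) summable_on A"
    using \<open>0 < \<theta>\<close> \<open>\<theta> < 1\<close> by (intro summable_on_cmult_right summable_on_power_mlen) auto
  moreover have "open U"
    unfolding U_def using open_scaling[OF _ assms(1), of r] r by simp
  ultimately have "holo_on U (\<lambda>z. \<Sum>\<^sub>\<infinity>k\<in>A. Q k z)"
    using bound \<open>U \<subseteq> G\<close> by (intro holo_on_infsum[where b = "\<lambda>k. C * \<theta> ^ mlen k"] holo_on_subset[OF holo]) auto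
  with r(3) show "\<exists>L. ((\<lambda>z. \<Sum>\<^sub>\<infinity>k\<in>A. Q k z) has_derivative L) (at z) \<and> (\<forall>c w. L (c *s w) = c * L w)"
    unfolding holo_on_def U_def by blast
qed

lemma Hk_norm_scaleR_le:
  assumes "q \<in> Hk k G" "k \<noteq> (\<lambda>_. 0)" "complete_circled G" "x \<in> G" "0 < r" "r < s" "s < 1"
    and bound: "\<And>\<mu>. norm \<mu> = 1 \<Longrightarrow> norm (q (\<mu> *s (s *\<^sub>R x))) \<le> S"
  shows "norm (q (r *\<^sub>R x)) \<le> S * (r / s) ^ mlen k"
proof -
  have "norm (q (complex_of_real (r / s) *s (s *\<^sub>R x))) \<le> norm (complex_of_real (r / s)) ^ mlen k * S"
  proof (rule Hk_norm_smult_le[OF assms(1,2), where R = "1 / s"])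
    show "\<mu> *s (s *\<^sub>R x) \<in> G" if "norm \<mu> < 1 / s" for \<mu>
    proof -
      have "\<mu> *s (s *\<^sub>R x) = (\<mu> * of_real s) *s x"
        by (simp add: vec_eq_iff) (simp add: scaleR_conv_of_real)
      moreover have "norm (\<mu> * of_real s) \<le> 1"
        using that assms(5-7) by (simp add: norm_mult field_simps)
      ultimately show ?thesis
        using complete_circled_smult[OF assms(3,4)] by simp
    qed
  qed (use assms(5-7) bound in \<open>simp_all add: norm_divide\<close>)
  moreover have "complex_of_real (r / s) *s (s *\<^sub>R x) = r *\<^sub>R x"
    using assms(5-7) by (simp add: vec_eq_iff) (simp add: scaleR_conv_of_real)
  ultimately show ?thesis
    using assms(5-7) by (simp add: mult.commute norm_divide)
qed

(* For r < s < 1 the Q k are uniformly bounded on the compact circled set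
   K = {mu *s (s *R x) : |mu| <= 1, x in closure G}, which lies inside G. *)
lemma abs_summable_locally_uniformly_imp_geometric_decay:
  assumes "bounded G" "complete_circled G" "(\<lambda>_. 0) \<notin> A"
    and Hk: "\<And>k. k \<in> A \<Longrightarrow> Q k \<in> Hk k G"
    and summable: "abs_summable_locally_uniformly_on G A Q"
  shows "geometric_decay_on_dilates G A Q"
  unfolding geometric_decay_on_dilates_def
proof (intro allI impI)
  fix r :: real assume r: "0 < r \<and> r < 1"
  define s where "s = (1 + r) / 2"
  have s: "r < s" "s < 1"
    using r by (auto simp: s_def)
  define K where "K = (\<lambda>(\<mu>, x). \<mu> *s (s *\<^sub>R x)) ` (cball (0::complex) 1 \<times> closure G)"
  have "continuous_on (cball 0 1 \<times> closure G) (\<lambda>(\<mu>, x). \<mu> *s (s *\<^sub>R x))"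
    unfolding case_prod_unfold vector_scalar_mult_def by (intro continuous_on_vec_lambda continuous_intros)
  then have K: "compact K"
    unfolding K_def using assms(1) by (intro compact_continuous_image compact_Times) auto
  have KG: "K \<subseteq> G"
    unfolding K_def using complete_circled_scaleR_closure[OF assms(2)] complete_circled_smult[OF assms(2)] r s
    by auto
  have cont: "continuous_on K (Q k)" if "k \<in> A" for k
  proof -
    have "holo_on G (Q k)"
      using Hk[OF that] by (simp add: Hk_def H_def)
    then show ?thesis
      using continuous_on_subset[OF holo_on_imp_continuous_on] KG by blast
  qed
  obtain S where "S > 0" and S: "\<And>k z. k \<in> A \<Longrightarrow> z \<in> K \<Longrightarrow> norm (Q k z) \<le> S"
    using abs_summable_locally_uniformly_on_bounded[OF summable K KG cont] by blast
  have "norm (Q k (r *\<^sub>R x)) \<le> S * (r / s) ^ mlen k" if "k \<in> A" "x \<in> G" for k x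
  proof (rule Hk_norm_scaleR_le[OF Hk[OF that(1)] _ assms(2) that(2)])
    show "norm (Q k (\<mu> *s (s *\<^sub>R x))) \<le> S" if "norm \<mu> = 1" for \<mu>
    proof (rule S[OF \<open>k \<in> A\<close>])
      have "(\<mu>, x) \<in> cball 0 1 \<times> closure G"
        using that \<open>x \<in> G\<close> closure_subset by auto
      then show "\<mu> *s (s *\<^sub>R x) \<in> K"
        unfolding K_def by (rule rev_image_eqI) simp
    qed
  qed (use that(1) assms(3) r s in auto)
  then have "\<forall>k\<in>A. \<forall>z\<in>(\<lambda>w. r *\<^sub>R w) ` G. norm (Q k z) \<le> S * (r / s) ^ mlen k"
    by blast
  moreover have "0 < r / s" "r / s < 1"
    using r s by auto
  ultimately show "\<exists>C>0. \<exists>\<theta>. 0 < \<theta> \<and> \<theta> < 1 \<and> (\<forall>k\<in>A. \<forall>z\<in>(\<lambda>w. r *\<^sub>R w) ` G. norm (Q k z) \<le> C * \<theta> ^ mlen k)"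
    using \<open>S > 0\<close> by blast
qed

theorem corollary4p6:
  fixes G :: "(complex^'n::finite) set"
    and Q :: "('n \<Rightarrow> nat) \<Rightarrow> complex^'n \<Rightarrow> complex"
  assumes "domain G" and "bounded G" and "complete_circled G"
    and "\<forall>k\<in>M. Q k \<in> Hk k G"
  shows "(\<exists>f\<in>H G.
            (\<forall>z\<in>G. (\<lambda>k. norm (Q k z)) summable_on M \<and> ((\<lambda>k. Q k z) has_sum f z) M) \<and>
            (\<forall>K. compact K \<and> K \<subseteq> G \<longrightarrow>
               (\<forall>\<epsilon>>0. \<exists>F. finite F \<and> F \<subseteq> M \<and>
                  (\<forall>z\<in>K. infsum (\<lambda>k. norm (Q k z)) (M - F) < \<epsilon>))))
         \<longleftrightarrow>
         (\<forall>r::real. 0 < r \<and> r < 1 \<longrightarrow>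
            (\<exists>C>0. \<exists>\<theta>::real. 0 < \<theta> \<and> \<theta> < 1 \<and>
               (\<forall>k\<in>M. \<forall>z\<in>(\<lambda>w. r *\<^sub>R w) ` G. norm (Q k z) \<le> C * \<theta> ^ mlen k)))"
proof -
  have "open G"
    using assms(1) by (simp add: domain_def)
  have Hk: "\<And>k. k \<in> M \<Longrightarrow> Q k \<in> Hk k G"
    using assms(4) by blast
  show ?thesis (is "?converges \<longleftrightarrow> ?decay")
  proof
    assume ?converges
    then have "abs_summable_locally_uniformly_on G M Q"
      unfolding abs_summable_locally_uniformly_on_def by blast
    moreover have "(\<lambda>_. 0) \<notin> M"
      by (simp add: M_def)
    ultimately have "geometric_decay_on_dilates G M Q"
      using abs_summable_locally_uniformly_imp_geometric_decay[OF assms(2,3) _ Hk] by blast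
    then show ?decay
      unfolding geometric_decay_on_dilates_def .
  next
    assume ?decay
    then have decay: "geometric_decay_on_dilates G M Q"
      unfolding geometric_decay_on_dilates_def .
    have summable: "abs_summable_locally_uniformly_on G M Q"
      using geometric_decay_majorant[OF \<open>open G\<close> assms(3) decay] by (rule abs_summable_locally_uniformly_onI)
    have "(\<lambda>z. \<Sum>\<^sub>\<infinity>k\<in>M. Q k z) \<in> H G"
      using geometric_decay_imp_holo_on_infsum[OF \<open>open G\<close> assms(3) decay] Hk by (simp add: H_def Hk_def)
    moreover have "\<forall>z\<in>G. ((\<lambda>k. Q k z) has_sum (\<Sum>\<^sub>\<infinity>k\<in>M. Q k z)) M"
      using abs_summable_locally_uniformly_on_has_sum[OF summable] by blast
    ultimately show ?converges
      using summable unfolding abs_summable_locally_uniformly_on_def by (intro bexI[of _ "\<lambda>z. \<Sum>\<^sub>\<infinity>k\<in>M. Q k z"]) blast+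
  qed
qed

end
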